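(* Let $\mathsf x=(\mathbf e_{\mathsf k_1}\ \cdots\ \mathbf e_{\mathsf k_s})\mathsf z\in\mathbb R^m$, where $\mathsf z\in\mathbb R^s$ is a random vector with $\mu_{\mathsf z}\ll\lambda^s$ and $\mathsf k=(\mathsf k_1,\dots,\mathsf k_s)^T\in\{1,\dots,m\}^s$ is a random index vector with $\mathsf k_1<\dots<\mathsf k_s$ (and $\mathbf e_i$ denotes the $i$-th unit vector of $\mathbb R^m$). If there exist $\mathbf A\in\mathbb R^{n\times m}$ and a Borel measurable $g\colon\mathbb R^{n\times m}\times\mathbb R^n\to\mathbb R^m$ such that $\mathbb P[g(\mathbf A,\mathbf A\mathsf x)\neq\mathsf x]<1$, then $n\ge s$.
   Context: $\mu_{\mathsf z}$ denotes the distribution of $\mathsf z$ and $\lambda^s$ Lebesgue measure on $\mathbb R^s$. *)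

theory Defs
  imports "HOL-Probability.Probability"
begin

text \<open>Vectors in R^d are represented as extensional functions on the index set {1..d}
  (points of PiM {1..d} (\<lambda>_. lborel)); n x m matrices as extensional functions on
  {1..n} \<times> {1..m}.\<close>

definition sparse_vec :: "nat \<Rightarrow> nat \<Rightarrow> (nat \<Rightarrow> nat) \<Rightarrow> (nat \<Rightarrow> real) \<Rightarrow> (nat \<Rightarrow> real)" where
  "sparse_vec m s kk zz = (\<lambda>i\<in>{1..m}. \<Sum>j=1..s. if kk j = i then zz j else 0)"

definition mat_vec :: "nat \<Rightarrow> nat \<Rightarrow> (nat \<times> nat \<Rightarrow> real) \<Rightarrow> (nat \<Rightarrow> real) \<Rightarrow> (nat \<Rightarrow> real)" where
  "mat_vec n m A v = (\<lambda>i\<in>{1..n}. \<Sum>j=1..m. A (i, j) * v j)"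

end

theory Submission
  imports Defs
begin

text \<open>Suppose \<open>s > n\<close> and fix a support pattern \<open>K\<^sub>1 < \<dots> < K\<^sub>s\<close>. The \<open>n \<times> s\<close> matrix
  \<open>A (e\<^sub>K\<^sub>1 \<dots> e\<^sub>K\<^sub>s)\<close> has a nonzero kernel vector \<open>v\<close>, so the decoder receives the same
  input at \<open>y\<close> and at \<open>y + t v\<close>; hence the set \<open>S \<subseteq> \<real>\<^sup>s\<close> of coefficient vectors on which it
  recovers \<open>(e\<^sub>K\<^sub>1 \<dots> e\<^sub>K\<^sub>s) y\<close> meets every line in direction \<open>v\<close> at most once. The
  translates of a bounded piece of \<open>S\<close> by \<open>v/(j+1)\<close> are then pairwise disjoint, have equal
  measure and lie in a common box, so \<open>S\<close> is a Lebesgue null set, and by absolute continuity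
  decoding fails almost surely on the event \<open>k = K\<close>. As there are only finitely many support
  patterns, decoding fails almost surely.\<close>

lemma homogeneous_system_nontrivial_solution:
  fixes a :: "'i \<Rightarrow> 'j \<Rightarrow> 'a::field"
  assumes "finite I" "finite J" "card I < card J"
  shows "\<exists>v. (\<exists>j\<in>J. v j \<noteq> 0) \<and> (\<forall>i\<in>I. (\<Sum>j\<in>J. a i j * v j) = 0)"
  using assms
proof (induction I arbitrary: J a rule: finite_induct)
  case empty
  then obtain j0 where "j0 \<in> J" by fastforce
  then show ?case by (intro exI[of _ "\<lambda>_. 1"]) auto
next
  case (insert i0 I)
  show ?case
  proof (cases "\<forall>j\<in>J. a i0 j = 0")
    case True
    with insert show ?thesis by fastforce
  next
    case False
    then obtain j0 where j0: "j0 \<in> J" "a i0 j0 \<noteq> 0" by auto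
    define J' where "J' = J - {j0}"
    define a' where "a' i j = a i j - (a i j0 / a i0 j0) * a i0 j" for i j
    have "finite J'" "card I < card J'" using insert.prems insert.hyps j0 by (auto simp: J'_def)
    from insert.IH[OF this, of a'] obtain w where w: "\<exists>j\<in>J'. w j \<noteq> 0"
      "\<forall>i\<in>I. (\<Sum>j\<in>J'. a' i j * w j) = 0" by auto
    define t where "t = - (\<Sum>j\<in>J'. a i0 j * w j) / a i0 j0"
    define v where "v j = (if j = j0 then t else w j)" for j
    have split: "(\<Sum>j\<in>J. a i j * v j) = (\<Sum>j\<in>J'. a i j * w j) + a i j0 * t" for i
    proof -
      have "(\<Sum>j\<in>J. a i j * v j) = a i j0 * v j0 + (\<Sum>j\<in>J'. a i j * v j)"
        using insert.prems j0(1) unfolding J'_def by (simp add: sum.remove)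
      also have "(\<Sum>j\<in>J'. a i j * v j) = (\<Sum>j\<in>J'. a i j * w j)"
        by (rule sum.cong) (auto simp: v_def J'_def)
      finally show ?thesis by (simp add: v_def)
    qed
    have "(\<Sum>j\<in>J. a i j * v j) = 0" if "i \<in> insert i0 I" for i
    proof (cases "i = i0")
      case True
      then show ?thesis using split[of i0] j0 by (simp add: t_def)
    next
      case False
      with that w(2) have "(\<Sum>j\<in>J'. a' i j * w j) = 0" by simp
      then have "(\<Sum>j\<in>J'. a i j * w j) - (a i j0 / a i0 j0) * (\<Sum>j\<in>J'. a i0 j * w j) = 0"
        by (simp add: a'_def algebra_simps sum_subtractf sum_distrib_left)
      then show ?thesis using split[of i] j0 by (simp add: t_def field_simps)
    qed
    moreover have "\<exists>j\<in>J. v j \<noteq> 0" using w(1) by (auto simp: v_def J'_def)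
    ultimately show ?thesis by blast
  qed
qed

lemma strict_mono_on_atLeastAtMost_Suc:
  fixes f :: "nat \<Rightarrow> 'a::order"
  assumes incr: "\<And>j. a \<le> j \<Longrightarrow> j < b \<Longrightarrow> f j < f (Suc j)"
  shows "strict_mono_on {a..b} f"
proof (rule strict_mono_onI)
  fix i j assume ij: "i \<in> {a..b}" "j \<in> {a..b}" "i < j"
  then have "Suc i \<le> j" by simp
  then show "f i < f j"
  proof (induction j rule: dec_induct)
    case base
    show ?case using ij by (intro incr) auto
  next
    case (step j)
    then have "f j < f (Suc j)" using ij by (intro incr) auto
    with step.IH show ?case by order
  qed
qed

lemma ennreal_suminf_const_less_top_imp_zero:
  fixes c :: ennreal
  assumes "(\<Sum>j::nat. c) < \<top>"
  shows "c = 0"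
proof -
  have "(\<Sum>j::nat. ennreal 1) = \<top>"
    by (rule summable_iff_suminf_neq_top) (auto simp: summable_const_iff)
  then have "(\<Sum>j::nat. c) = \<top> * c"
    using ennreal_suminf_multc[of "\<lambda>_. 1" c] by simp
  with assms show ?thesis by (simp add: ennreal_mult_less_top)
qed

lemma lborel_PiM_translation_invariant:
  fixes c :: "'i \<Rightarrow> real"
  assumes I: "finite I"
  shows "distr (PiM I (\<lambda>_. lborel)) (PiM I (\<lambda>_. lborel)) (\<lambda>x. \<lambda>i\<in>I. x i + c i) = PiM I (\<lambda>_. lborel)"
proof -
  interpret product_sigma_finite "\<lambda>_::'i. lborel::real measure"
    by (simp add: product_sigma_finite_def sigma_finite_lborel)
  have shift_meas: "(\<lambda>x. \<lambda>i\<in>I. x i + c i) \<in> measurable (PiM I (\<lambda>_. lborel)) (PiM I (\<lambda>_. lborel))"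
    by (intro measurable_restrict) (simp add: measurable_component_singleton)
  show ?thesis
  proof (rule PiM_eqI[OF I])
    fix A assume A: "\<And>i. i \<in> I \<Longrightarrow> A i \<in> sets (lborel::real measure)"
    have "emeasure (distr (PiM I (\<lambda>_. lborel)) (PiM I (\<lambda>_. lborel)) (\<lambda>x. \<lambda>i\<in>I. x i + c i)) (Pi\<^sub>E I A)
       = emeasure (PiM I (\<lambda>_. lborel)) ((\<lambda>x. \<lambda>i\<in>I. x i + c i) -` Pi\<^sub>E I A \<inter> space (PiM I (\<lambda>_. lborel)))"
      by (rule emeasure_distr[OF shift_meas]) (use A I in \<open>auto intro!: sets_PiM_I_finite\<close>)
    also have "(\<lambda>x. \<lambda>i\<in>I. x i + c i) -` Pi\<^sub>E I A \<inter> space (PiM I (\<lambda>_. lborel))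
             = Pi\<^sub>E I (\<lambda>i. (\<lambda>x. c i + x) -` A i)"
      by (auto simp: space_PiM PiE_def Pi_def add.commute)
    also have "emeasure (PiM I (\<lambda>_. lborel)) (Pi\<^sub>E I (\<lambda>i. (\<lambda>x. c i + x) -` A i))
             = (\<Prod>i\<in>I. emeasure lborel ((\<lambda>x. c i + x) -` A i))"
    proof (rule emeasure_PiM[OF I])
      fix i assume "i \<in> I"
      have "(\<lambda>x. c i + x) \<in> measurable (lborel::real measure) lborel" by simp
      then show "(\<lambda>x. c i + x) -` A i \<in> sets lborel"
        using A[OF \<open>i \<in> I\<close>] measurable_sets[of "\<lambda>x. c i + x" lborel lborel "A i"] by simp
    qed
    also have "\<dots> = (\<Prod>i\<in>I. emeasure lborel (A i))"
    proof (rule prod.cong[OF refl])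
      fix i assume "i \<in> I"
      have "emeasure lborel (A i) = emeasure (distr lborel borel ((+) (c i))) (A i)"
        by (simp add: lborel_distr_plus)
      also have "\<dots> = emeasure lborel ((\<lambda>x. c i + x) -` A i)"
        using A[OF \<open>i \<in> I\<close>] by (subst emeasure_distr) auto
      finally show "emeasure lborel ((\<lambda>x. c i + x) -` A i) = emeasure lborel (A i)" by simp
    qed
    finally show "emeasure (distr (PiM I (\<lambda>_. lborel)) (PiM I (\<lambda>_. lborel)) (\<lambda>x. \<lambda>i\<in>I. x i + c i)) (Pi\<^sub>E I A)
                = (\<Prod>i\<in>I. emeasure lborel (A i))" .
  qed simp
qed

lemma emeasure_PiM_lborel_translate:
  fixes c :: "'i \<Rightarrow> real"
  assumes I: "finite I" and S: "S \<in> sets (PiM I (\<lambda>_. lborel))"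
  shows "emeasure (PiM I (\<lambda>_. lborel)) ((\<lambda>x. \<lambda>i\<in>I. x i + c i) -` S \<inter> space (PiM I (\<lambda>_. lborel)))
       = emeasure (PiM I (\<lambda>_. lborel)) S"
proof -
  have "(\<lambda>x. \<lambda>i\<in>I. x i + c i) \<in> measurable (PiM I (\<lambda>_. lborel)) (PiM I (\<lambda>_. lborel))"
    by (intro measurable_restrict) (simp add: measurable_component_singleton)
  with S have "emeasure (PiM I (\<lambda>_. lborel)) ((\<lambda>x. \<lambda>i\<in>I. x i + c i) -` S \<inter> space (PiM I (\<lambda>_. lborel)))
      = emeasure (distr (PiM I (\<lambda>_. lborel)) (PiM I (\<lambda>_. lborel)) (\<lambda>x. \<lambda>i\<in>I. x i + c i)) S"
    by (simp add: emeasure_distr)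
  then show ?thesis by (simp add: lborel_PiM_translation_invariant[OF I])
qed

lemma emeasure_PiM_lborel_cube_less_top:
  assumes "finite I"
  shows "emeasure (PiM I (\<lambda>_. lborel)) (Pi\<^sub>E I (\<lambda>_. {-r..r::real})) < \<top>"
proof -
  interpret product_sigma_finite "\<lambda>_::'i. lborel::real measure"
    by (simp add: product_sigma_finite_def sigma_finite_lborel)
  show ?thesis
    using assms by (simp add: emeasure_PiM emeasure_lborel_Icc_eq power_less_top_ennreal)
qed

lemma null_sets_PiM_lborel_if_bounded_and_lines_meet_once:
  fixes S :: "('i \<Rightarrow> real) set" and v :: "'i \<Rightarrow> real"
  assumes I: "finite I" and S: "S \<in> sets (PiM I (\<lambda>_. lborel))"
    and bounded: "S \<subseteq> Pi\<^sub>E I (\<lambda>_. {-r..r})"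
    and once: "\<And>x t. x \<in> S \<Longrightarrow> (\<lambda>i\<in>I. x i + t * v i) \<in> S \<Longrightarrow> t = 0"
  shows "S \<in> null_sets (PiM I (\<lambda>_. lborel))"
proof -
  define L where "L = PiM I (\<lambda>_. lborel::real measure)"
  define c where "c j i = - v i / real (Suc j)" for j i
  define T where "T j = (\<lambda>x. \<lambda>i\<in>I. x i + c j i) -` S \<inter> space L" for j
  define C where "C = r + (\<Sum>i\<in>I. \<bar>v i\<bar>)"
  have T_sets: "T j \<in> sets L" for j
    unfolding T_def L_def using S by (intro measurable_sets measurable_restrict) auto
  have T_box: "T j \<subseteq> Pi\<^sub>E I (\<lambda>_. {-C..C})" for j
  proof
    fix x assume "x \<in> T j"
    then have x: "x \<in> space L" "(\<lambda>i\<in>I. x i + c j i) \<in> S" by (auto simp: T_def)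
    have "x i \<in> {-C..C}" if "i \<in> I" for i
    proof -
      have "x i + c j i \<in> {-r..r}"
        using PiE_mem[OF subsetD[OF bounded x(2)] that] unfolding restrict_apply'[OF that] .
      moreover have "\<bar>c j i\<bar> \<le> \<bar>v i\<bar>"
        by (simp add: c_def abs_divide divide_le_eq_1 field_simps mult_le_cancel_left1)
      moreover have "\<bar>v i\<bar> \<le> (\<Sum>i\<in>I. \<bar>v i\<bar>)" by (rule member_le_sum[OF that _ I]) simp
      ultimately show ?thesis unfolding C_def atLeastAtMost_iff abs_le_iff by linarith
    qed
    moreover have "x \<in> extensional I" using x(1) by (simp add: L_def space_PiM PiE_iff)
    ultimately show "x \<in> Pi\<^sub>E I (\<lambda>_. {-C..C})" by (simp add: PiE_iff)
  qed
  have "disjoint_family T"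
    unfolding disjoint_family_on_def
  proof (intro ballI impI)
    fix j l :: nat assume "j \<noteq> l"
    show "T j \<inter> T l = {}"
    proof (rule ccontr)
      assume "T j \<inter> T l \<noteq> {}"
      then obtain x where x: "(\<lambda>i\<in>I. x i + c j i) \<in> S" "(\<lambda>i\<in>I. x i + c l i) \<in> S"
        by (auto simp: T_def)
      define t where "t = 1 / real (Suc j) - 1 / real (Suc l)"
      have "x i + c j i + t * v i = x i + c l i" for i
        by (simp add: c_def t_def left_diff_distrib)
      then have shift: "(\<lambda>i\<in>I. (\<lambda>i\<in>I. x i + c j i) i + t * v i) = (\<lambda>i\<in>I. x i + c l i)"
        by (intro restrict_ext) simp
      have "t = 0" by (rule once[OF x(1)]) (simp only: shift x(2))
      with \<open>j \<noteq> l\<close> show False by (simp add: t_def)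
    qed
  qed
  have T_measure: "emeasure L (T j) = emeasure L S" for j
    unfolding T_def L_def by (rule emeasure_PiM_lborel_translate[OF I S])
  have "(\<Sum>j. emeasure L (T j)) = emeasure L (\<Union>j. T j)"
    using T_sets \<open>disjoint_family T\<close> by (intro suminf_emeasure) auto
  also have "\<dots> \<le> emeasure L (Pi\<^sub>E I (\<lambda>_. {-C..C}))"
    using T_box I by (intro emeasure_mono) (auto simp: L_def intro!: sets_PiM_I_finite)
  also have "\<dots> < \<top>" unfolding L_def by (rule emeasure_PiM_lborel_cube_less_top[OF I])
  finally have "(\<Sum>j::nat. emeasure L S) < \<top>" by (simp only: T_measure)
  then have "emeasure L S = 0" by (rule ennreal_suminf_const_less_top_imp_zero)
  with S show ?thesis by (auto simp: L_def intro: null_setsI)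
qed

lemma null_sets_PiM_lborel_if_lines_meet_once:
  fixes S :: "('i \<Rightarrow> real) set" and v :: "'i \<Rightarrow> real"
  assumes I: "finite I" and S: "S \<in> sets (PiM I (\<lambda>_. lborel))"
    and once: "\<And>x t. x \<in> S \<Longrightarrow> (\<lambda>i\<in>I. x i + t * v i) \<in> S \<Longrightarrow> t = 0"
  shows "S \<in> null_sets (PiM I (\<lambda>_. lborel))"
proof -
  have "S = (\<Union>R::nat. S \<inter> Pi\<^sub>E I (\<lambda>_. {- real R..real R}))"
  proof (intro equalityI subsetI)
    fix x assume x: "x \<in> S"
    obtain R :: nat where R: "(\<Sum>i\<in>I. \<bar>x i\<bar>) \<le> real R" using real_arch_simple by blast
    have "\<bar>x i\<bar> \<le> real R" if "i \<in> I" for i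
      by (rule order_trans[OF member_le_sum R]) (use I that in auto)
    moreover have "x \<in> extensional I"
      using x sets.sets_into_space[OF S] by (auto simp: space_PiM PiE_def)
    ultimately have "x \<in> Pi\<^sub>E I (\<lambda>_. {- real R..real R})"
      by (auto simp: PiE_def Pi_def abs_le_iff minus_le_iff)
    with x show "x \<in> (\<Union>R. S \<inter> Pi\<^sub>E I (\<lambda>_. {- real R..real R}))" by blast
  qed blast
  also have "\<dots> \<in> null_sets (PiM I (\<lambda>_. lborel))"
  proof (intro null_sets_UN null_sets_PiM_lborel_if_bounded_and_lines_meet_once[OF I])
    fix R :: nat
    show "S \<inter> Pi\<^sub>E I (\<lambda>_. {- real R..real R}) \<in> sets (PiM I (\<lambda>_. lborel))"
      using S I by (auto intro!: sets_PiM_I_finite)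
  qed (auto intro: once)
  finally show ?thesis .
qed

lemma sparse_vec_apply:
  assumes K: "inj_on K {1..s}" "K ` {1..s} \<subseteq> {1..m}" and j: "j \<in> {1..s}"
  shows "sparse_vec m s K y (K j) = y j"
proof -
  have "K j \<in> {1..m}" using K(2) j by blast
  then have "sparse_vec m s K y (K j) = (\<Sum>j'=1..s. if K j' = K j then y j' else 0)"
    by (simp add: sparse_vec_def)
  also have "\<dots> = (\<Sum>j'=1..s. if j' = j then y j' else 0)"
    using K(1) j by (intro sum.cong refl) (auto dest: inj_onD)
  also have "\<dots> = y j" using j by simp
  finally show ?thesis .
qed

lemma inj_on_sparse_vec:
  assumes K: "inj_on K {1..s}" "K ` {1..s} \<subseteq> {1..m}"
  shows "inj_on (sparse_vec m s K) (extensional {1..s})"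
proof (rule inj_onI)
  fix y y' assume y: "y \<in> extensional {1..s}" and y': "y' \<in> extensional {1..s}"
    and eq: "sparse_vec m s K y = sparse_vec m s K y'"
  show "y = y'"
  proof (rule extensionalityI[OF y y'])
    fix j assume j: "j \<in> {1..s}"
    have "y j = sparse_vec m s K y (K j)" by (rule sparse_vec_apply[OF K j, symmetric])
    also have "\<dots> = y' j" unfolding eq by (rule sparse_vec_apply[OF K j])
    finally show "y j = y' j" .
  qed
qed

lemma mat_vec_sparse_vec:
  assumes "K ` {1..s} \<subseteq> {1..m}"
  shows "mat_vec n m A (sparse_vec m s K y) = (\<lambda>i\<in>{1..n}. \<Sum>j=1..s. A (i, K j) * y j)"
  unfolding mat_vec_def
proof (rule restrict_ext)
  fix i
  have "(\<Sum>l=1..m. A (i, l) * sparse_vec m s K y l)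
      = (\<Sum>l=1..m. \<Sum>j=1..s. if K j = l then A (i, l) * y j else 0)"
    by (rule sum.cong[OF refl]) (auto simp: sparse_vec_def sum_distrib_left if_distrib intro!: sum.cong)
  also have "\<dots> = (\<Sum>j=1..s. \<Sum>l=1..m. if K j = l then A (i, l) * y j else 0)"
    by (rule sum.swap)
  also have "\<dots> = (\<Sum>j=1..s. A (i, K j) * y j)"
    using assms by (intro sum.cong[OF refl]) (auto simp: sum.delta image_subset_iff)
  finally show "(\<Sum>l=1..m. A (i, l) * sparse_vec m s K y l) = (\<Sum>j=1..s. A (i, K j) * y j)" .
qed

lemma measurable_sparse_vec:
  assumes "\<forall>j\<in>{1..s}. (\<lambda>\<omega>. kk \<omega> j) \<in> measurable N (count_space UNIV)"
    and "\<forall>j\<in>{1..s}. (\<lambda>\<omega>. zz \<omega> j) \<in> borel_measurable N"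
  shows "(\<lambda>\<omega>. sparse_vec m s (kk \<omega>) (zz \<omega>)) \<in> measurable N (PiM {1..m} (\<lambda>_. borel))"
  unfolding sparse_vec_def using assms
  by (intro measurable_restrict borel_measurable_sum measurable_If predE[OF pred_count_space_const1]) auto

lemma measurable_mat_vec:
  assumes "f \<in> measurable N (PiM {1..m} (\<lambda>_. borel :: real measure))"
  shows "(\<lambda>\<omega>. mat_vec n m A (f \<omega>)) \<in> measurable N (PiM {1..n} (\<lambda>_. borel))"
  unfolding mat_vec_def
  using measurable_compose[OF assms measurable_component_singleton]
  by (intro measurable_restrict borel_measurable_sum borel_measurable_times measurable_const) auto

lemma sets_decoding_success:
  assumes g: "g \<in> measurable (PiM ({1..n} \<times> {1..m}) (\<lambda>_. borel) \<Otimes>\<^sub>M PiM {1..n} (\<lambda>_. borel))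
                              (PiM {1..m} (\<lambda>_. borel))"
    and A: "A \<in> ({1..n} \<times> {1..m}) \<rightarrow>\<^sub>E UNIV"
    and f: "f \<in> measurable N (PiM {1..m} (\<lambda>_. borel :: real measure))"
  shows "{\<omega>\<in>space N. g (A, mat_vec n m A (f \<omega>)) = f \<omega>} \<in> sets N"
proof -
  have "A \<in> space (PiM ({1..n} \<times> {1..m}) (\<lambda>_. borel :: real measure))"
    using A by (simp add: space_PiM)
  then have decode: "(\<lambda>\<omega>. g (A, mat_vec n m A (f \<omega>))) \<in> measurable N (PiM {1..m} (\<lambda>_. borel))"
    by (intro measurable_compose[OF _ g] measurable_Pair measurable_const measurable_mat_vec f)
  have "{\<omega>\<in>space N. g (A, mat_vec n m A (f \<omega>)) = f \<omega>}
      = {\<omega>\<in>space N. \<forall>l\<in>{1..m}. g (A, mat_vec n m A (f \<omega>)) l = f \<omega> l}"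
    using measurable_space[OF decode] measurable_space[OF f]
    by (auto simp: space_PiM PiE_def intro: extensionalityI)
  also have "\<dots> \<in> sets N"
    using measurable_compose[OF decode measurable_component_singleton]
      measurable_compose[OF f measurable_component_singleton]
    by (intro sets.sets_Collect_finite_All measurable_equality_set) auto
  finally show ?thesis .
qed

lemma null_sets_decoding_success:
  fixes A :: "nat \<times> nat \<Rightarrow> real"
  assumes g: "g \<in> measurable (PiM ({1..n} \<times> {1..m}) (\<lambda>_. borel) \<Otimes>\<^sub>M PiM {1..n} (\<lambda>_. borel))
                              (PiM {1..m} (\<lambda>_. borel))"
    and A: "A \<in> ({1..n} \<times> {1..m}) \<rightarrow>\<^sub>E UNIV"
    and K: "inj_on K {1..s}" "K ` {1..s} \<subseteq> {1..m}" and "n < s"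
  shows "{y \<in> space (PiM {1..s} (\<lambda>_. lborel)). g (A, mat_vec n m A (sparse_vec m s K y)) = sparse_vec m s K y}
           \<in> null_sets (PiM {1..s} (\<lambda>_. lborel))"
    (is "?S \<in> _")
proof -
  have "card {1..n} < card {1..s}" using \<open>n < s\<close> by simp
  from homogeneous_system_nontrivial_solution[OF finite_atLeastAtMost finite_atLeastAtMost this,
      of "\<lambda>i j. A (i, K j)"]
  obtain v where v: "\<exists>j\<in>{1..s}. v j \<noteq> 0"
    and kernel: "\<forall>i\<in>{1..n}. (\<Sum>j=1..s. A (i, K j) * v j) = 0"
    by blast
  have "(\<lambda>y. sparse_vec m s K y) \<in> measurable (PiM {1..s} (\<lambda>_. lborel)) (PiM {1..m} (\<lambda>_. borel))"
    by (rule measurable_sparse_vec) (auto simp: measurable_component_singleton)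
  then have "?S \<in> sets (PiM {1..s} (\<lambda>_. lborel))" by (rule sets_decoding_success[OF g A])
  then show ?thesis
  proof (rule null_sets_PiM_lborel_if_lines_meet_once[of "{1..s}" _ v, OF finite_atLeastAtMost])
    fix y t assume y: "y \<in> ?S" and y': "(\<lambda>j\<in>{1..s}. y j + t * v j) \<in> ?S"
    have "(\<Sum>j=1..s. A (i, K j) * (\<lambda>j\<in>{1..s}. y j + t * v j) j) = (\<Sum>j=1..s. A (i, K j) * y j)"
      if "i \<in> {1..n}" for i
    proof -
      have "(\<Sum>j=1..s. A (i, K j) * (\<lambda>j\<in>{1..s}. y j + t * v j) j)
          = (\<Sum>j=1..s. A (i, K j) * y j) + t * (\<Sum>j=1..s. A (i, K j) * v j)"
        by (simp add: sum.distrib sum_distrib_left algebra_simps)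
      with bspec[OF kernel that] show ?thesis by simp
    qed
    then have "mat_vec n m A (sparse_vec m s K (\<lambda>j\<in>{1..s}. y j + t * v j)) = mat_vec n m A (sparse_vec m s K y)"
      unfolding mat_vec_sparse_vec[OF K(2)] by (intro restrict_ext) simp
    with y y' have "sparse_vec m s K (\<lambda>j\<in>{1..s}. y j + t * v j) = sparse_vec m s K y" by simp
    moreover have "y \<in> extensional {1..s}" using y by (auto simp: space_PiM PiE_def)
    moreover have "(\<lambda>j\<in>{1..s}. y j + t * v j) \<in> extensional {1..s}" by simp
    ultimately have shifted_eq: "(\<lambda>j\<in>{1..s}. y j + t * v j) = y"
      using inj_onD[OF inj_on_sparse_vec[OF K]] by blast
    obtain j where "j \<in> {1..s}" "v j \<noteq> 0" using v(1) by blast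
    with fun_cong[OF shifted_eq, of j] show "t = 0" by simp
  qed
qed

lemma AE_decoding_fails_on_fixed_support:
  fixes z :: "'a \<Rightarrow> nat \<Rightarrow> real" and k :: "'a \<Rightarrow> nat \<Rightarrow> nat" and A :: "nat \<times> nat \<Rightarrow> real"
  assumes z: "z \<in> measurable M (PiM {1..s} (\<lambda>_. lborel))"
    and ac: "absolutely_continuous (PiM {1..s} (\<lambda>_. lborel)) (distr M (PiM {1..s} (\<lambda>_. lborel)) z)"
    and g: "g \<in> measurable (PiM ({1..n} \<times> {1..m}) (\<lambda>_. borel) \<Otimes>\<^sub>M PiM {1..n} (\<lambda>_. borel))
                              (PiM {1..m} (\<lambda>_. borel))"
    and A: "A \<in> ({1..n} \<times> {1..m}) \<rightarrow>\<^sub>E UNIV"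
    and K: "inj_on K {1..s}" "K ` {1..s} \<subseteq> {1..m}" and "n < s"
  shows "AE \<omega> in M. (\<forall>j\<in>{1..s}. k \<omega> j = K j) \<longrightarrow>
           g (A, mat_vec n m A (sparse_vec m s (k \<omega>) (z \<omega>))) \<noteq> sparse_vec m s (k \<omega>) (z \<omega>)"
    (is "AE \<omega> in M. ?decoding_fails \<omega>")
proof -
  define S where "S = {y \<in> space (PiM {1..s} (\<lambda>_. lborel)).
                        g (A, mat_vec n m A (sparse_vec m s K y)) = sparse_vec m s K y}"
  have "S \<in> null_sets (PiM {1..s} (\<lambda>_. lborel))"
    unfolding S_def by (rule null_sets_decoding_success[OF g A K \<open>n < s\<close>])
  with ac have "z -` S \<inter> space M \<in> null_sets M"
    using null_sets_distr_iff[OF z] by (auto simp: absolutely_continuous_def)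
  then show ?thesis
  proof (rule AE_I', intro subsetI)
    fix \<omega> assume "\<omega> \<in> {\<omega> \<in> space M. \<not> ?decoding_fails \<omega>}"
    then have \<omega>: "\<omega> \<in> space M" "\<forall>j\<in>{1..s}. k \<omega> j = K j"
      and "g (A, mat_vec n m A (sparse_vec m s (k \<omega>) (z \<omega>))) = sparse_vec m s (k \<omega>) (z \<omega>)"
      by auto
    moreover have "sparse_vec m s (k \<omega>) (z \<omega>) = sparse_vec m s K (z \<omega>)"
      using \<omega>(2) unfolding sparse_vec_def by (intro restrict_ext sum.cong) auto
    ultimately show "\<omega> \<in> z -` S \<inter> space M" using measurable_space[OF z \<omega>(1)] by (simp add: S_def)
  qed
qed

lemma AE_decoding_fails:
  fixes z :: "'a \<Rightarrow> nat \<Rightarrow> real" and k :: "'a \<Rightarrow> nat \<Rightarrow> nat" and A :: "nat \<times> nat \<Rightarrow> real"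
  assumes z: "z \<in> measurable M (PiM {1..s} (\<lambda>_. lborel))"
    and ac: "absolutely_continuous (PiM {1..s} (\<lambda>_. lborel)) (distr M (PiM {1..s} (\<lambda>_. lborel)) z)"
    and k_range: "\<forall>\<omega>\<in>space M. \<forall>j\<in>{1..s}. 1 \<le> k \<omega> j \<and> k \<omega> j \<le> m"
    and k_incr: "\<forall>\<omega>\<in>space M. \<forall>j. 1 \<le> j \<and> j < s \<longrightarrow> k \<omega> j < k \<omega> (Suc j)"
    and g: "g \<in> measurable (PiM ({1..n} \<times> {1..m}) (\<lambda>_. borel) \<Otimes>\<^sub>M PiM {1..n} (\<lambda>_. borel))
                              (PiM {1..m} (\<lambda>_. borel))"
    and A: "A \<in> ({1..n} \<times> {1..m}) \<rightarrow>\<^sub>E UNIV" and "n < s"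
  shows "AE \<omega> in M. g (A, mat_vec n m A (sparse_vec m s (k \<omega>) (z \<omega>))) \<noteq> sparse_vec m s (k \<omega>) (z \<omega>)"
proof -
  define Ks where "Ks = {K \<in> {1..s} \<rightarrow>\<^sub>E {1..m}. \<forall>j. 1 \<le> j \<and> j < s \<longrightarrow> K j < K (Suc j)}"
  have "AE \<omega> in M. \<forall>K\<in>Ks. (\<forall>j\<in>{1..s}. k \<omega> j = K j) \<longrightarrow>
          g (A, mat_vec n m A (sparse_vec m s (k \<omega>) (z \<omega>))) \<noteq> sparse_vec m s (k \<omega>) (z \<omega>)"
  proof (rule AE_finite_allI)
    show "finite Ks" unfolding Ks_def by (rule finite_subset[of _ "{1..s} \<rightarrow>\<^sub>E {1..m}"]) (auto intro: finite_PiE)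
    fix K assume K: "K \<in> Ks"
    then have "strict_mono_on {1..s} K"
      unfolding Ks_def by (intro strict_mono_on_atLeastAtMost_Suc) auto
    moreover have "K ` {1..s} \<subseteq> {1..m}" using K by (auto simp: Ks_def)
    ultimately show "AE \<omega> in M. (\<forall>j\<in>{1..s}. k \<omega> j = K j) \<longrightarrow>
          g (A, mat_vec n m A (sparse_vec m s (k \<omega>) (z \<omega>))) \<noteq> sparse_vec m s (k \<omega>) (z \<omega>)"
      using \<open>n < s\<close> by (intro AE_decoding_fails_on_fixed_support[OF z ac g A] strict_mono_on_imp_inj_on)
  qed
  then show ?thesis
    using AE_space
  proof eventually_elim
    case (elim \<omega>)
    have "restrict (k \<omega>) {1..s} \<in> Ks" using k_range k_incr elim(2) by (auto simp: Ks_def)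
    with elim(1) have "(\<forall>j\<in>{1..s}. k \<omega> j = restrict (k \<omega>) {1..s} j) \<longrightarrow>
        g (A, mat_vec n m A (sparse_vec m s (k \<omega>) (z \<omega>))) \<noteq> sparse_vec m s (k \<omega>) (z \<omega>)"
      by (rule bspec)
    then show ?case by (rule mp) simp
  qed
qed

theorem lemma8:
  fixes M :: "'a measure" and s m n :: nat
    and z :: "'a \<Rightarrow> nat \<Rightarrow> real" and k :: "'a \<Rightarrow> nat \<Rightarrow> nat"
  assumes "prob_space M"
    and "z \<in> measurable M (PiM {1..s} (\<lambda>_. lborel))"
    and "absolutely_continuous (PiM {1..s} (\<lambda>_. lborel)) (distr M (PiM {1..s} (\<lambda>_. lborel)) z)"
    and "\<forall>j\<in>{1..s}. (\<lambda>\<omega>. k \<omega> j) \<in> measurable M (count_space UNIV)"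
    and "\<forall>\<omega>\<in>space M. \<forall>j\<in>{1..s}. 1 \<le> k \<omega> j \<and> k \<omega> j \<le> m"
    and "\<forall>\<omega>\<in>space M. \<forall>j. 1 \<le> j \<and> j < s \<longrightarrow> k \<omega> j < k \<omega> (Suc j)"
    and "\<exists>A g. A \<in> ({1..n} \<times> {1..m}) \<rightarrow>\<^sub>E UNIV
            \<and> g \<in> measurable (PiM ({1..n} \<times> {1..m}) (\<lambda>_. borel) \<Otimes>\<^sub>M PiM {1..n} (\<lambda>_. borel))
                             (PiM {1..m} (\<lambda>_. borel))
            \<and> measure M {\<omega> \<in> space M. g (A, mat_vec n m A (sparse_vec m s (k \<omega>) (z \<omega>)))
                                       \<noteq> sparse_vec m s (k \<omega>) (z \<omega>)} < 1"
  shows "s \<le> n"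
proof (rule ccontr)
  assume "\<not> s \<le> n"
  interpret prob_space M by fact
  obtain A g where A: "A \<in> ({1..n} \<times> {1..m}) \<rightarrow>\<^sub>E UNIV"
    and g: "g \<in> measurable (PiM ({1..n} \<times> {1..m}) (\<lambda>_. borel) \<Otimes>\<^sub>M PiM {1..n} (\<lambda>_. borel))
                             (PiM {1..m} (\<lambda>_. borel))"
    and fail: "prob {\<omega> \<in> space M. g (A, mat_vec n m A (sparse_vec m s (k \<omega>) (z \<omega>)))
                                  \<noteq> sparse_vec m s (k \<omega>) (z \<omega>)} < 1" (is "prob ?F < 1")
    using assms(7) by blast
  have "AE \<omega> in M. g (A, mat_vec n m A (sparse_vec m s (k \<omega>) (z \<omega>))) \<noteq> sparse_vec m s (k \<omega>) (z \<omega>)"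
    using \<open>\<not> s \<le> n\<close> by (intro AE_decoding_fails[OF assms(2,3,5,6) g A]) simp
  moreover have "?F \<in> events"
    using measurable_compose[OF assms(2) measurable_component_singleton]
    by (intro sets.sets_Collect_neg sets_decoding_success[OF g A] measurable_sparse_vec[OF assms(4)]) auto
  ultimately have "prob ?F = 1" by (simp add: prob_Collect_eq_1)
  with fail show False by simp
qed

end
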